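(* Let $\Pi$ be a finite, satisfiable set of linear constraints over $x_1,\dots,x_D$, let $\mathrm{CL}$ be the constraint layer built from $\Pi$ and the ordering $x_1,\dots,x_D$, and let $\mathrm{CL}^{\ge}$ be the constraint layer built from $\Pi^{\ge}$ and the same ordering. Let $\tilde x\in\mathbb{R}^D$. Then: (1) if $\mathrm{CL}(\tilde x)=\mathrm{CL}^{\ge}(\tilde x)$, then $\mathrm{CL}(\tilde x)$ is optimal with respect to $\Pi$; (2) otherwise, $\mathrm{CL}(\tilde x)$ tends to $\mathrm{CL}^{\ge}(\tilde x)$ as the $\epsilon$ values used to compute $\mathrm{CL}(\tilde x)$ tend to $0$ (i.e., regarding $\mathrm{CL}(\tilde x)$, with all other aspects of the computation fixed, as a function of the $\epsilon$ values $\epsilon_1,\dots,\epsilon_k$, one has $\lim_{(\epsilon_1,\dots,\epsilon_k)\to 0}\mathrm{CL}(\tilde x)=\mathrm{CL}^{\ge}(\tilde x)$).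
   Context: A constraint is a linear inequality $\phi:\ \sum_{k=1}^D w_k x_k + b \unrhd 0$ with $w_k,b\in\mathbb{R}$ and $\unrhd\in\{\ge,>\}$; it is strict if $\unrhd$ is $>$. A point $\tilde x\in\mathbb{R}^D$ satisfies $\phi$ if $\sum_k w_k\tilde x_k+b\unrhd 0$, and satisfies a set $\Pi$ if it satisfies every member; $\Pi$ is satisfiable if some point satisfies it. $\Pi^{\ge}$ denotes the set obtained from $\Pi$ by replacing each strict constraint $\sum_kw_kx_k+b>0$ by $\sum_kw_kx_k+b\ge0$. Variable $x_j$ appears positively (resp. negatively) in $\phi$ if $w_j>0$ (resp. $w_j<0$). For a set $\Gamma$ of constraints, $\Gamma^+_j$ (resp. $\Gamma^-_j$) is the subset in which $x_j$ appears positively (resp. negatively). Reduction: for $\phi^1=\sum_k w^1_kx_k+b^1\unrhd^1 0\in\Gamma^-_j$ and $\phi^2=\sum_k w^2_kx_k+b^2\unrhd^2 0\in\Gamma^+_j$, $red_j(\phi^1,\phi^2)$ is $\sum_{k\ne j}(w^1_k|w^2_j|+w^2_k|w^1_j|)x_k + b^1|w^2_j|+b^2|w^1_j| \unrhd 0$, where $\unrhd$ is $\ge$ if both $\unrhd^1,\unrhd^2$ are $\ge$, and $>$ otherwise. Sets $\Pi_i$ (for a constraint set $\Pi$): $\Pi_D=\Pi$, and for $i<D$, with $j=i+1$, $\Pi_i=(\Pi_j\setminus(\Pi^-_j\cup\Pi^+_j))\cup\{red_j(\phi^1,\phi^2):\phi^1\in\Pi^-_j,\phi^2\in\Pi^+_j\}$,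 where $\Pi^\pm_j$ means $(\Pi_j)^\pm_j$. (Thus only $x_1,\dots,x_i$ occur in $\Pi_i$; we write $\Pi_i^\pm$ for $(\Pi_i)^\pm_i$.) For $\phi=\sum_kw_kx_k+b\unrhd0$ with $w_i\neq0$, let $\varepsilon^\phi_i=-\sum_{k\ne i}(w_k/w_i)x_k-b/w_i$; for $\phi\in\Pi_i$ it depends only on $x_1,\dots,x_{i-1}$. Constraint layer built from $\Pi$: given $\tilde x\in\mathbb{R}^D$, $\mathrm{CL}(\tilde x)\in\mathbb{R}^D$ is computed coordinatewise for $i=1,\dots,D$. Let $\varepsilon^\phi_i(\mathrm{CL}(\tilde x))$ denote $\varepsilon^\phi_i$ evaluated at the already computed values $\mathrm{CL}(\tilde x)_1,\dots,\mathrm{CL}(\tilde x)_{i-1}$, and set $ub_i=\min\{\varepsilon^\phi_i(\mathrm{CL}(\tilde x)):\phi\in\Pi_i^-\}$, $lb_i=\max\{\varepsilon^\phi_i(\mathrm{CL}(\tilde x)):\phi\in\Pi_i^+\}$ (with $\min\emptyset=+\infty$, $\max\emptyset=-\infty$). Then $\mathrm{CL}(\tilde x)_i=\min^i(\max^i(\tilde x_i,lb_i),ub_i)$, where $\max^i(a,lb_i)$ equals $v=\max(a,lb_i)$ unless some strict $\phi\in\Pi_i^+$ has $v=\varepsilon^\phi_i(\mathrm{CL}(\tilde x))$, in which case it equals $v+\epsilon$ for a chosen $\epsilon>0$ small enough that $lb_i+\epsilon< ub_i$; symmetrically $\min^i(a,ub_i)$ equals $u=\min(a,ub_i)$ unless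 some strict $\phi\in\Pi_i^-$ has $u=\varepsilon^\phi_i(\mathrm{CL}(\tilde x))$, in which case it equals $u-\epsilon$ for a chosen $\epsilon>0$ small enough that $ub_i-\epsilon>lb_i$. The chosen positive numbers are the $\epsilon$ values used to compute $\mathrm{CL}(\tilde x)$. Since $\Pi^{\ge}$ has no strict constraints, $\mathrm{CL}^{\ge}$ uses no $\epsilon$ values: $\mathrm{CL}^{\ge}(\tilde x)_i=\min(\max(\tilde x_i,lb_i),ub_i)$ with bounds computed from $\Pi^{\ge}$. Optimality: for a set of constraints $\Gamma$ and $\tilde x\in\mathbb{R}^D$, a point $y\in\mathbb{R}^D$ is optimal (for $\tilde x$) with respect to $\Gamma$ if $y$ satisfies $\Gamma$ and there is no $\tilde x'\neq y$ satisfying $\Gamma$ with $|\tilde x'_i-\tilde x_i|\le|y_i-\tilde x_i|$ for all $i=1,\dots,D$. *)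

theory Defs
  imports Complex_Main "HOL-Library.Extended_Real"
begin

text \<open>Vectors in R^D are functions nat => real, with the coordinates 1..D relevant.\<close>

datatype constr = Constr (wt: "nat \<Rightarrow> real") (bias: real) (strict: bool)

definition lhs :: "nat \<Rightarrow> constr \<Rightarrow> (nat \<Rightarrow> real) \<Rightarrow> real" where
  "lhs D c x = (\<Sum>k=1..D. wt c k * x k) + bias c"

definition sat :: "nat \<Rightarrow> constr \<Rightarrow> (nat \<Rightarrow> real) \<Rightarrow> bool" where
  "sat D c x = (if strict c then lhs D c x > 0 else lhs D c x \<ge> 0)"

definition sat_set :: "nat \<Rightarrow> constr set \<Rightarrow> (nat \<Rightarrow> real) \<Rightarrow> bool" where
  "sat_set D \<Gamma> x = (\<forall>c\<in>\<Gamma>. sat D c x)"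

definition satisfiable :: "nat \<Rightarrow> constr set \<Rightarrow> bool" where
  "satisfiable D \<Gamma> = (\<exists>x. sat_set D \<Gamma> x)"

definition geq_set :: "constr set \<Rightarrow> constr set" where
  "geq_set \<Gamma> = (\<lambda>c. Constr (wt c) (bias c) False) ` \<Gamma>"

definition poss :: "nat \<Rightarrow> constr set \<Rightarrow> constr set" where
  "poss j \<Gamma> = {c\<in>\<Gamma>. wt c j > 0}"

definition negs :: "nat \<Rightarrow> constr set \<Rightarrow> constr set" where
  "negs j \<Gamma> = {c\<in>\<Gamma>. wt c j < 0}"

definition red :: "nat \<Rightarrow> constr \<Rightarrow> constr \<Rightarrow> constr" where
  "red j c1 c2 = Constr
     (\<lambda>k. if k = j then 0 else wt c1 k * \<bar>wt c2 j\<bar> + wt c2 k * \<bar>wt c1 j\<bar>)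
     (bias c1 * \<bar>wt c2 j\<bar> + bias c2 * \<bar>wt c1 j\<bar>)
     (strict c1 \<or> strict c2)"

definition elim_step :: "nat \<Rightarrow> constr set \<Rightarrow> constr set" where
  "elim_step j \<Gamma> = (\<Gamma> - (negs j \<Gamma> \<union> poss j \<Gamma>))
      \<union> {red j c1 c2 | c1 c2. c1 \<in> negs j \<Gamma> \<and> c2 \<in> poss j \<Gamma>}"

text \<open>fm \<Pi> D k = \<Pi>_{D-k}.\<close>
primrec fm :: "constr set \<Rightarrow> nat \<Rightarrow> nat \<Rightarrow> constr set" where
  "fm \<Pi> D 0 = \<Pi>"
| "fm \<Pi> D (Suc k) = elim_step (D - k) (fm \<Pi> D k)"

definition PiSet :: "constr set \<Rightarrow> nat \<Rightarrow> nat \<Rightarrow> constr set" where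
  "PiSet \<Pi> D i = fm \<Pi> D (D - i)"

definition epsv :: "nat \<Rightarrow> constr \<Rightarrow> nat \<Rightarrow> (nat \<Rightarrow> real) \<Rightarrow> real" where
  "epsv D c i y = - (\<Sum>k\<in>{1..D} - {i}. (wt c k / wt c i) * y k) - bias c / wt c i"

definition lbE :: "constr set \<Rightarrow> nat \<Rightarrow> nat \<Rightarrow> (nat \<Rightarrow> real) \<Rightarrow> ereal" where
  "lbE \<Pi> D i y = (if poss i (PiSet \<Pi> D i) = {} then -\<infinity>
      else ereal (Max ((\<lambda>c. epsv D c i y) ` poss i (PiSet \<Pi> D i))))"

definition ubE :: "constr set \<Rightarrow> nat \<Rightarrow> nat \<Rightarrow> (nat \<Rightarrow> real) \<Rightarrow> ereal" where
  "ubE \<Pi> D i y = (if negs i (PiSet \<Pi> D i) = {} then \<infinity>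
      else ereal (Min ((\<lambda>c. epsv D c i y) ` negs i (PiSet \<Pi> D i))))"

definition vmax :: "constr set \<Rightarrow> nat \<Rightarrow> nat \<Rightarrow> (nat \<Rightarrow> real) \<Rightarrow> real \<Rightarrow> real" where
  "vmax \<Pi> D i y a = (if poss i (PiSet \<Pi> D i) = {} then a
      else max a (Max ((\<lambda>c. epsv D c i y) ` poss i (PiSet \<Pi> D i))))"

definition adj_low :: "constr set \<Rightarrow> nat \<Rightarrow> nat \<Rightarrow> (nat \<Rightarrow> real) \<Rightarrow> real \<Rightarrow> bool" where
  "adj_low \<Pi> D i y a = (\<exists>c\<in>poss i (PiSet \<Pi> D i). strict c \<and> vmax \<Pi> D i y a = epsv D c i y)"

definition maxi :: "constr set \<Rightarrow> nat \<Rightarrow> (nat \<Rightarrow> bool \<Rightarrow> real) \<Rightarrow> nat \<Rightarrow> (nat \<Rightarrow> real) \<Rightarrow> real \<Rightarrow> real" where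
  "maxi \<Pi> D e i y a = (if adj_low \<Pi> D i y a then vmax \<Pi> D i y a + e i False else vmax \<Pi> D i y a)"

definition umin :: "constr set \<Rightarrow> nat \<Rightarrow> nat \<Rightarrow> (nat \<Rightarrow> real) \<Rightarrow> real \<Rightarrow> real" where
  "umin \<Pi> D i y a = (if negs i (PiSet \<Pi> D i) = {} then a
      else min a (Min ((\<lambda>c. epsv D c i y) ` negs i (PiSet \<Pi> D i))))"

definition adj_up :: "constr set \<Rightarrow> nat \<Rightarrow> nat \<Rightarrow> (nat \<Rightarrow> real) \<Rightarrow> real \<Rightarrow> bool" where
  "adj_up \<Pi> D i y a = (\<exists>c\<in>negs i (PiSet \<Pi> D i). strict c \<and> umin \<Pi> D i y a = epsv D c i y)"

definition mini :: "constr set \<Rightarrow> nat \<Rightarrow> (nat \<Rightarrow> bool \<Rightarrow> real) \<Rightarrow> nat \<Rightarrow> (nat \<Rightarrow> real) \<Rightarrow> real \<Rightarrow> real" where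
  "mini \<Pi> D e i y a = (if adj_up \<Pi> D i y a then umin \<Pi> D i y a - e i True else umin \<Pi> D i y a)"

definition coord :: "constr set \<Rightarrow> nat \<Rightarrow> (nat \<Rightarrow> bool \<Rightarrow> real) \<Rightarrow> nat \<Rightarrow> (nat \<Rightarrow> real) \<Rightarrow> real \<Rightarrow> real" where
  "coord \<Pi> D e i y a = mini \<Pi> D e i y (maxi \<Pi> D e i y a)"

primrec clp :: "constr set \<Rightarrow> nat \<Rightarrow> (nat \<Rightarrow> bool \<Rightarrow> real) \<Rightarrow> (nat \<Rightarrow> real) \<Rightarrow> nat \<Rightarrow> (nat \<Rightarrow> real)" where
  "clp \<Pi> D e x 0 = (\<lambda>_. 0)"
| "clp \<Pi> D e x (Suc i) = (clp \<Pi> D e x i)(Suc i := coord \<Pi> D e (Suc i) (clp \<Pi> D e x i) (x (Suc i)))"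

definition CL :: "constr set \<Rightarrow> nat \<Rightarrow> (nat \<Rightarrow> bool \<Rightarrow> real) \<Rightarrow> (nat \<Rightarrow> real) \<Rightarrow> (nat \<Rightarrow> real)" where
  "CL \<Pi> D e x = clp \<Pi> D e x D"

definition valid_at :: "constr set \<Rightarrow> nat \<Rightarrow> (nat \<Rightarrow> bool \<Rightarrow> real) \<Rightarrow> nat \<Rightarrow> (nat \<Rightarrow> real) \<Rightarrow> real \<Rightarrow> bool" where
  "valid_at \<Pi> D e i y a =
     ((adj_low \<Pi> D i y a \<longrightarrow> 0 < e i False \<and> lbE \<Pi> D i y + ereal (e i False) < ubE \<Pi> D i y) \<and>
      (adj_up \<Pi> D i y (maxi \<Pi> D e i y a) \<longrightarrow>
          0 < e i True \<and> ubE \<Pi> D i y - ereal (e i True) > lbE \<Pi> D i y))"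

definition valid_eps :: "constr set \<Rightarrow> nat \<Rightarrow> (nat \<Rightarrow> bool \<Rightarrow> real) \<Rightarrow> (nat \<Rightarrow> real) \<Rightarrow> bool" where
  "valid_eps \<Pi> D e x = (\<forall>i\<in>{1..D}. valid_at \<Pi> D e i (clp \<Pi> D e x (i - 1)) (x i))"

definition CLge :: "constr set \<Rightarrow> nat \<Rightarrow> (nat \<Rightarrow> real) \<Rightarrow> (nat \<Rightarrow> real)" where
  "CLge \<Pi> D x = CL (geq_set \<Pi>) D (\<lambda>_ _. 0) x"

definition optimal :: "nat \<Rightarrow> constr set \<Rightarrow> (nat \<Rightarrow> real) \<Rightarrow> (nat \<Rightarrow> real) \<Rightarrow> bool" where
  "optimal D \<Gamma> x y = (sat_set D \<Gamma> y \<and>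
     \<not> (\<exists>x'. sat_set D \<Gamma> x' \<and> (\<exists>i\<in>{1..D}. x' i \<noteq> y i) \<and>
            (\<forall>i\<in>{1..D}. \<bar>x' i - x i\<bar> \<le> \<bar>y i - x i\<bar>)))"

end

theory Submission
  imports Defs
begin

text \<open>Fourier--Motzkin elimination guarantees that, once \<open>x\<^sub>1, \<dots>, x\<^sub>i\<^sub>-\<^sub>1\<close> satisfy
  \<open>\<Pi>\<^sub>i\<^sub>-\<^sub>1\<close>, every lower bound \<open>\<epsilon>\<^sup>\<phi>\<^sub>i\<close> of \<open>x\<^sub>i\<close> coming from \<open>\<Pi>\<^sub>i\<close> lies below every
  upper bound, strictly when one of the two constraints is strict. Clamping \<open>x\<^sub>i\<close> into
  that interval, and moving it by a valid \<open>\<epsilon>\<close> off a strict bound it lands on, therefore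
  satisfies \<open>\<Pi>\<^sub>i\<close>; by induction \<open>CL(x)\<close> satisfies \<open>\<Pi>\<close>.
  Any point satisfying \<open>\<Pi>\<close> satisfies \<open>\<Pi>\<^sub>i\<close> as well, so if it is coordinatewise at least as
  close to \<open>x\<close> as \<open>CL\<^sup>\<ge>(x)\<close>, then inductively it agrees with \<open>CL\<^sup>\<ge>(x)\<close> on the first
  coordinates, hence its \<open>i\<close>-th coordinate lies in the very interval into which
  \<open>CL\<^sup>\<ge>\<close> clamped \<open>x\<^sub>i\<close>, and a clamp is the unique closest point of its interval.
  For the limit, \<open>\<Pi>\<close> and \<open>\<Pi>\<^sup>\<ge>\<close> give the same bounds, each bound is Lipschitz in the
  previous coordinates, and the \<open>\<epsilon>\<close> shifts add at most \<open>2\<eta>\<close> per coordinate, so the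
  \<open>\<ell>\<^sub>1\<close>-distance between \<open>CL(x)\<close> and \<open>CL\<^sup>\<ge>(x)\<close> is \<open>O(\<eta>)\<close>.\<close>

definition nonstrict :: "constr \<Rightarrow> constr" where
  "nonstrict c = Constr (wt c) (bias c) False"

lemma geq_set_eq_image_nonstrict: "geq_set \<Gamma> = nonstrict ` \<Gamma>"
  by (simp add: geq_set_def nonstrict_def)

lemma wt_nonstrict [simp]: "wt (nonstrict c) = wt c"
  and bias_nonstrict [simp]: "bias (nonstrict c) = bias c"
  by (simp_all add: nonstrict_def)

lemma poss_image_nonstrict: "poss j (nonstrict ` G) = nonstrict ` poss j G"
  by (auto simp: poss_def)

lemma negs_image_nonstrict: "negs j (nonstrict ` G) = nonstrict ` negs j G"
  by (auto simp: negs_def)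

lemma red_nonstrict: "red j (nonstrict c1) (nonstrict c2) = nonstrict (red j c1 c2)"
  unfolding red_def nonstrict_def constr.sel by simp

lemma elim_step_eq:
  "elim_step j G = {c \<in> G. wt c j = 0} \<union> (\<lambda>(c1, c2). red j c1 c2) ` (negs j G \<times> poss j G)"
  by (auto simp: elim_step_def negs_def poss_def)

lemma elim_step_image_nonstrict: "elim_step j (nonstrict ` G) = nonstrict ` elim_step j G"
proof -
  have "{c \<in> nonstrict ` G. wt c j = 0} = nonstrict ` {c \<in> G. wt c j = 0}"
    by auto
  moreover have "(\<lambda>(c1, c2). red j c1 c2) ` (nonstrict ` A \<times> nonstrict ` B)
      = nonstrict ` (\<lambda>(c1, c2). red j c1 c2) ` (A \<times> B)" for A B
    by (force simp: red_nonstrict[symmetric])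
  ultimately show ?thesis
    by (simp add: elim_step_eq poss_image_nonstrict negs_image_nonstrict image_Un)
qed

lemma PiSet_geq_set: "PiSet (geq_set \<Pi>) D i = nonstrict ` PiSet \<Pi> D i"
proof -
  have "fm (nonstrict ` \<Pi>) D m = nonstrict ` fm \<Pi> D m" for m
    by (induction m) (simp_all add: elim_step_image_nonstrict)
  then show ?thesis
    by (simp add: PiSet_def geq_set_eq_image_nonstrict)
qed

lemma epsv_nonstrict [simp]: "epsv D (nonstrict c) i y = epsv D c i y"
  by (simp add: epsv_def)

lemma vmax_geq_set: "vmax (geq_set \<Pi>) D i y a = vmax \<Pi> D i y a"
  by (simp add: vmax_def PiSet_geq_set poss_image_nonstrict image_image)

lemma umin_geq_set: "umin (geq_set \<Pi>) D i y a = umin \<Pi> D i y a"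
  by (simp add: umin_def PiSet_geq_set negs_image_nonstrict image_image)

lemma coord_geq_set: "coord (geq_set \<Pi>) D (\<lambda>_ _. 0) i y a = umin \<Pi> D i y (vmax \<Pi> D i y a)"
  by (simp add: coord_def mini_def maxi_def vmax_geq_set umin_geq_set)

section \<open>Fourier--Motzkin elimination\<close>

lemma finite_elim_step: "finite G \<Longrightarrow> finite (elim_step j G)"
  by (simp add: elim_step_eq negs_def poss_def)

lemma finite_PiSet: "finite \<Pi> \<Longrightarrow> finite (PiSet \<Pi> D i)"
proof -
  assume "finite \<Pi>"
  then have "finite (fm \<Pi> D m)" for m
    by (induction m) (simp_all add: finite_elim_step)
  then show ?thesis
    by (simp add: PiSet_def)
qed

lemma wt_elim_step_zero:
  assumes "c \<in> elim_step j G" and "k = j \<or> (\<forall>c'\<in>G. wt c' k = 0)"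
  shows "wt c k = 0"
  using assms by (auto simp: elim_step_eq negs_def poss_def red_def)

lemma wt_PiSet_zero:
  assumes "c \<in> PiSet \<Pi> D i" and "i < k" and "k \<le> D"
  shows "wt c k = 0"
proof -
  have "\<forall>c\<in>fm \<Pi> D m. wt c k = 0" if "D - m < k" for m
    using that
  proof (induction m)
    case (Suc m)
    then have "k = D - m \<or> D - m < k"
      by linarith
    with Suc show ?case
      using wt_elim_step_zero[of _ "D - m" "fm \<Pi> D m" k] by auto
  qed (use \<open>k \<le> D\<close> in simp)
  moreover have "D - (D - i) < k"
    using assms(2,3) by linarith
  ultimately show ?thesis
    using assms(1) by (auto simp: PiSet_def)
qed

lemma PiSet_Suc: "Suc i \<le> D \<Longrightarrow> PiSet \<Pi> D i = elim_step (Suc i) (PiSet \<Pi> D (Suc i))"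
proof -
  assume "Suc i \<le> D"
  then have "D - i = Suc (D - Suc i)" and "D - (D - Suc i) = Suc i"
    by simp_all
  then show ?thesis
    by (simp add: PiSet_def)
qed

lemma PiSet_D [simp]: "PiSet \<Pi> D D = \<Pi>"
  by (simp add: PiSet_def)

lemma lhs_red:
  assumes "wt c1 j < 0" and "0 < wt c2 j"
  shows "lhs D (red j c1 c2) z = \<bar>wt c2 j\<bar> * lhs D c1 z + \<bar>wt c1 j\<bar> * lhs D c2 z"
proof -
  have "wt (red j c1 c2) k = wt c1 k * \<bar>wt c2 j\<bar> + wt c2 k * \<bar>wt c1 j\<bar>" for k
    using assms by (simp add: red_def)
  then show ?thesis
    by (simp add: lhs_def red_def sum.distrib sum_distrib_left algebra_simps)
qed

lemma strict_red [simp]: "strict (red j c1 c2) = (strict c1 \<or> strict c2)"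
  by (simp add: red_def)

lemma sat_red:
  assumes "wt c1 j < 0" and "0 < wt c2 j" and "sat D c1 z" and "sat D c2 z"
  shows "sat D (red j c1 c2) z"
proof -
  define p q where "p = \<bar>wt c2 j\<bar>" and "q = \<bar>wt c1 j\<bar>"
  have "0 < p" "0 < q"
    using assms(1,2) by (simp_all add: p_def q_def)
  then have "0 \<le> p * lhs D c1 z \<and> (strict c1 \<longrightarrow> 0 < p * lhs D c1 z)"
    and "0 \<le> q * lhs D c2 z \<and> (strict c2 \<longrightarrow> 0 < q * lhs D c2 z)"
    using assms(3,4) by (auto simp: sat_def zero_le_mult_iff zero_less_mult_iff split: if_splits)
  then show ?thesis
    unfolding sat_def lhs_red[OF assms(1,2)] p_def[symmetric] q_def[symmetric] by auto
qed

lemma sat_set_elim_step: "sat_set D G z \<Longrightarrow> sat_set D (elim_step j G) z"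
  by (auto simp: sat_set_def elim_step_eq negs_def poss_def intro: sat_red)

lemma sat_set_PiSet: "sat_set D \<Pi> z \<Longrightarrow> sat_set D (PiSet \<Pi> D i) z"
proof -
  assume "sat_set D \<Pi> z"
  then have "sat_set D (fm \<Pi> D m) z" for m
    by (induction m) (simp_all add: sat_set_elim_step)
  then show ?thesis
    by (simp add: PiSet_def)
qed

section \<open>Constraints as bounds on one coordinate\<close>

lemma lhs_eq_wt_mult_epsv:
  assumes "i \<in> {1..D}" and "wt c i \<noteq> 0"
  shows "lhs D c z = wt c i * (z i - epsv D c i z)"
proof -
  have "lhs D c z = wt c i * z i + (\<Sum>k\<in>{1..D} - {i}. wt c k * z k) + bias c"
    using assms(1) by (simp add: lhs_def sum.remove)
  moreover have "wt c i * epsv D c i z = - (\<Sum>k\<in>{1..D} - {i}. wt c k * z k) - bias c"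
    using assms(2) by (simp add: epsv_def algebra_simps sum_distrib_left)
  ultimately show ?thesis
    by (simp add: algebra_simps)
qed

lemma sat_iff_epsv_le:
  assumes "i \<in> {1..D}" and "0 < wt c i"
  shows "sat D c z \<longleftrightarrow> epsv D c i z \<le> z i \<and> (strict c \<longrightarrow> epsv D c i z < z i)"
  using assms by (auto simp: sat_def lhs_eq_wt_mult_epsv zero_less_mult_iff zero_le_mult_iff)

lemma sat_iff_le_epsv:
  assumes "i \<in> {1..D}" and "wt c i < 0"
  shows "sat D c z \<longleftrightarrow> z i \<le> epsv D c i z \<and> (strict c \<longrightarrow> z i < epsv D c i z)"
  using assms by (auto simp: sat_def lhs_eq_wt_mult_epsv zero_less_mult_iff zero_le_mult_iff)

lemma epsv_cong:
  "(\<And>k. k \<in> {1..D} \<Longrightarrow> k \<noteq> i \<Longrightarrow> wt c k \<noteq> 0 \<Longrightarrow> y k = y' k) \<Longrightarrow> epsv D c i y = epsv D c i y'"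
  unfolding epsv_def by (intro arg_cong2[where f="(-)"] arg_cong[where f=uminus] sum.cong) auto

lemma epsv_upd [simp]: "epsv D c i (y(i := v)) = epsv D c i y"
  by (rule epsv_cong) auto

lemma sat_upd_wt_zero: "wt c i = 0 \<Longrightarrow> sat D c (y(i := v)) = sat D c y"
proof -
  assume "wt c i = 0"
  then have "lhs D c (y(i := v)) = lhs D c y"
    unfolding lhs_def by (intro arg_cong2[where f="(+)"] sum.cong) auto
  then show ?thesis
    by (simp add: sat_def)
qed

lemma epsv_le_of_sat_red:
  assumes i: "i \<in> {1..D}" and "c1 \<in> negs i G" and "c2 \<in> poss i G"
    and "sat D (red i c1 c2) y"
  shows "epsv D c2 i y \<le> epsv D c1 i y \<and> (strict c1 \<or> strict c2 \<longrightarrow> epsv D c2 i y < epsv D c1 i y)"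
proof -
  define p where "p = \<bar>wt c1 i\<bar> * \<bar>wt c2 i\<bar>"
  have w: "wt c1 i < 0" "0 < wt c2 i"
    using assms by (auto simp: negs_def poss_def)
  then have "lhs D (red i c1 c2) y
      = \<bar>wt c2 i\<bar> * (wt c1 i * (y i - epsv D c1 i y)) + \<bar>wt c1 i\<bar> * (wt c2 i * (y i - epsv D c2 i y))"
    using lhs_red lhs_eq_wt_mult_epsv[OF i] by simp
  also have "\<dots> = p * (epsv D c1 i y - epsv D c2 i y)"
    using w by (simp add: p_def algebra_simps)
  finally have "lhs D (red i c1 c2) y = p * (epsv D c1 i y - epsv D c2 i y)" .
  moreover have "0 < p"
    unfolding p_def using w by (intro mult_pos_pos) auto
  ultimately show ?thesis
    using assms(4) by (auto simp: sat_def zero_le_mult_iff zero_less_mult_iff split: if_splits)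
qed

definition bounds_separated :: "nat \<Rightarrow> constr set \<Rightarrow> nat \<Rightarrow> (nat \<Rightarrow> real) \<Rightarrow> bool" where
  "bounds_separated D G i y \<longleftrightarrow> (\<forall>c1\<in>negs i G. \<forall>c2\<in>poss i G.
      epsv D c2 i y \<le> epsv D c1 i y \<and> (strict c1 \<or> strict c2 \<longrightarrow> epsv D c2 i y < epsv D c1 i y))"

lemma bounds_separated_if_sat_elim_step:
  assumes "i \<in> {1..D}" and "sat_set D (elim_step i G) y"
  shows "bounds_separated D G i y"
  unfolding bounds_separated_def
proof (intro ballI)
  fix c1 c2 assume "c1 \<in> negs i G" "c2 \<in> poss i G"
  moreover from this have "sat D (red i c1 c2) y"
    using assms(2) by (auto simp: sat_set_def elim_step_eq)
  ultimately show "epsv D c2 i y \<le> epsv D c1 i y \<and> (strict c1 \<or> strict c2 \<longrightarrow> epsv D c2 i y < epsv D c1 i y)"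
    by (rule epsv_le_of_sat_red[OF assms(1)])
qed

section \<open>Soundness of one coordinate of the constraint layer\<close>

lemma maxi_above_poss:
  assumes "finite (PiSet \<Pi> D i)" and "adj_low \<Pi> D i y a \<longrightarrow> 0 < e i False"
    and "c \<in> poss i (PiSet \<Pi> D i)"
  shows "epsv D c i y \<le> maxi \<Pi> D e i y a \<and> (strict c \<longrightarrow> epsv D c i y < maxi \<Pi> D e i y a)"
proof -
  have "epsv D c i y \<le> vmax \<Pi> D i y a"
    using assms(1,3) by (auto simp: vmax_def poss_def intro: max.coboundedI2)
  then show ?thesis
    using assms(2,3) by (auto simp: maxi_def adj_low_def)
qed

lemma mini_below_negs:
  assumes "finite (PiSet \<Pi> D i)" and "adj_up \<Pi> D i y b \<longrightarrow> 0 < e i True"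
    and "c \<in> negs i (PiSet \<Pi> D i)"
  shows "mini \<Pi> D e i y b \<le> epsv D c i y \<and> (strict c \<longrightarrow> mini \<Pi> D e i y b < epsv D c i y)"
proof -
  have "umin \<Pi> D i y b \<le> epsv D c i y"
    using assms(1,3) by (auto simp: umin_def negs_def intro: min.coboundedI2)
  then show ?thesis
    using assms(2,3) by (auto simp: mini_def adj_up_def)
qed

text \<open>The upper clamp can only move the value down to an upper bound, which lies above
  all lower bounds by the reduction, or \<open>\<epsilon>\<close> below an upper bound, which the validity of \<open>\<epsilon>\<close>
  keeps above all lower bounds.\<close>

lemma mini_above_poss:
  assumes fin: "finite (PiSet \<Pi> D i)"
    and sep: "bounds_separated D (PiSet \<Pi> D i) i y"
    and valid: "adj_up \<Pi> D i y b \<longrightarrow> lbE \<Pi> D i y < ubE \<Pi> D i y - ereal (e i True)"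
    and c: "c \<in> poss i (PiSet \<Pi> D i)"
    and b: "epsv D c i y \<le> b \<and> (strict c \<longrightarrow> epsv D c i y < b)"
  shows "epsv D c i y \<le> mini \<Pi> D e i y b \<and> (strict c \<longrightarrow> epsv D c i y < mini \<Pi> D e i y b)"
proof -
  let ?N = "negs i (PiSet \<Pi> D i)" and ?P = "poss i (PiSet \<Pi> D i)"
  let ?U = "Min ((\<lambda>c. epsv D c i y) ` ?N)" and ?L = "Max ((\<lambda>c. epsv D c i y) ` ?P)"
  have fN: "finite ?N" and fP: "finite ?P"
    using fin by (simp_all add: negs_def poss_def)
  have "epsv D c i y \<le> ?L"
    using fP c by simp
  have "umin \<Pi> D i y b = b \<or> ?N \<noteq> {} \<and> umin \<Pi> D i y b = ?U"
    by (auto simp: umin_def min_def)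
  then consider (shift) "adj_up \<Pi> D i y b" | (unchanged) "\<not> adj_up \<Pi> D i y b" "umin \<Pi> D i y b = b"
    | (clamped) "\<not> adj_up \<Pi> D i y b" "?N \<noteq> {}" "umin \<Pi> D i y b = ?U"
    by blast
  then show ?thesis
  proof cases
    case shift
    then obtain c1 where c1: "c1 \<in> ?N" "umin \<Pi> D i y b = epsv D c1 i y"
      by (auto simp: adj_up_def)
    have "umin \<Pi> D i y b \<le> ?U"
      using c1(1) by (auto simp: umin_def)
    moreover have "?U \<le> epsv D c1 i y"
      using fN c1(1) by simp
    moreover have "?N \<noteq> {}" "?P \<noteq> {}"
      using c1(1) c by auto
    ultimately have "?L < umin \<Pi> D i y b - e i True"
      using valid shift c1(2) by (auto simp: lbE_def ubE_def)
    with \<open>epsv D c i y \<le> ?L\<close> shift show ?thesis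
      by (simp add: mini_def)
  next
    case unchanged
    with b show ?thesis
      by (simp add: mini_def)
  next
    case clamped
    then obtain c1 where "c1 \<in> ?N" "?U = epsv D c1 i y"
      using fN by (metis (no_types, lifting) Min_in finite_imageI image_iff image_is_empty)
    with clamped sep c show ?thesis
      by (simp add: mini_def bounds_separated_def)
  qed
qed

lemma sat_set_PiSet_upd_coord:
  assumes fin: "finite (PiSet \<Pi> D i)" and i: "i \<in> {1..D}"
    and sat_elim: "sat_set D (elim_step i (PiSet \<Pi> D i)) y"
    and valid: "valid_at \<Pi> D e i y a"
  shows "sat_set D (PiSet \<Pi> D i) (y(i := coord \<Pi> D e i y a))"
  unfolding sat_set_def
proof
  fix c assume cG: "c \<in> PiSet \<Pi> D i"
  let ?m = "maxi \<Pi> D e i y a"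
  have sep: "bounds_separated D (PiSet \<Pi> D i) i y"
    using i sat_elim by (rule bounds_separated_if_sat_elim_step)
  consider "wt c i = 0" | "0 < wt c i" | "wt c i < 0"
    by linarith
  then show "sat D c (y(i := coord \<Pi> D e i y a))"
  proof cases
    case 1
    with cG sat_elim show ?thesis
      by (simp add: sat_upd_wt_zero sat_set_def elim_step_eq)
  next
    case 2
    with cG have "c \<in> poss i (PiSet \<Pi> D i)"
      by (simp add: poss_def)
    then have "epsv D c i y \<le> mini \<Pi> D e i y ?m \<and> (strict c \<longrightarrow> epsv D c i y < mini \<Pi> D e i y ?m)"
      using valid maxi_above_poss[OF fin]
      by (intro mini_above_poss[OF fin sep]) (auto simp: valid_at_def)
    with 2 show ?thesis
      by (simp add: sat_iff_epsv_le[OF i] coord_def)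
  next
    case 3
    with cG have "c \<in> negs i (PiSet \<Pi> D i)"
      by (simp add: negs_def)
    with 3 valid show ?thesis
      using mini_below_negs[OF fin]
      by (simp add: sat_iff_le_epsv[OF i] coord_def valid_at_def)
  qed
qed

lemma clp_stable: "k \<le> n \<Longrightarrow> clp \<Pi> D e x n k = clp \<Pi> D e x k k"
  by (induction n) (auto simp: le_Suc_eq)

lemma sat_PiSet_0_iff: "c \<in> PiSet \<Pi> D 0 \<Longrightarrow> sat D c z = sat D c z'"
proof -
  assume "c \<in> PiSet \<Pi> D 0"
  then have "lhs D c z = bias c" for z
    using wt_PiSet_zero[of c \<Pi> D 0] by (simp add: lhs_def)
  then show ?thesis
    by (simp add: sat_def)
qed

lemma sat_set_PiSet_clp:
  assumes fin: "finite \<Pi>" and "satisfiable D \<Pi>" and valid: "valid_eps \<Pi> D e x"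
  shows "i \<le> D \<Longrightarrow> sat_set D (PiSet \<Pi> D i) (clp \<Pi> D e x i)"
proof (induction i)
  case 0
  obtain z where "sat_set D \<Pi> z"
    using \<open>satisfiable D \<Pi>\<close> by (auto simp: satisfiable_def)
  then have "sat_set D (PiSet \<Pi> D 0) z"
    by (rule sat_set_PiSet)
  then show ?case
    using sat_PiSet_0_iff by (fastforce simp: sat_set_def)
next
  case (Suc i)
  then have "sat_set D (elim_step (Suc i) (PiSet \<Pi> D (Suc i))) (clp \<Pi> D e x i)"
    by (simp add: PiSet_Suc[symmetric])
  moreover have "valid_at \<Pi> D e (Suc i) (clp \<Pi> D e x i) (x (Suc i))"
    using valid Suc.prems unfolding valid_eps_def by force
  moreover have "Suc i \<in> {1..D}"
    using Suc.prems by simp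
  ultimately show ?case
    using sat_set_PiSet_upd_coord[OF finite_PiSet[OF fin]] by (simp only: clp.simps)
qed

lemma sat_set_CL:
  assumes "finite \<Pi>" and "satisfiable D \<Pi>" and "valid_eps \<Pi> D e x"
  shows "sat_set D \<Pi> (CL \<Pi> D e x)"
  using sat_set_PiSet_clp[OF assms, of D] by (simp add: CL_def)

section \<open>Optimality of \<open>CL\<^sup>\<ge>\<close>\<close>

lemma umin_vmax_unique_closest:
  assumes fin: "finite (PiSet \<Pi> D i)"
    and lower: "\<forall>c\<in>poss i (PiSet \<Pi> D i). epsv D c i y \<le> t"
    and upper: "\<forall>c\<in>negs i (PiSet \<Pi> D i). t \<le> epsv D c i y"
    and closer: "\<bar>t - a\<bar> \<le> \<bar>umin \<Pi> D i y (vmax \<Pi> D i y a) - a\<bar>"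
  shows "t = umin \<Pi> D i y (vmax \<Pi> D i y a)"
proof -
  let ?N = "negs i (PiSet \<Pi> D i)" and ?P = "poss i (PiSet \<Pi> D i)"
  have "finite ?N" "finite ?P"
    using fin by (simp_all add: negs_def poss_def)
  then have "?P \<noteq> {} \<Longrightarrow> Max ((\<lambda>c. epsv D c i y) ` ?P) \<le> t"
    and "?N \<noteq> {} \<Longrightarrow> t \<le> Min ((\<lambda>c. epsv D c i y) ` ?N)"
    using lower upper by simp_all
  then have "vmax \<Pi> D i y a = a \<or> a < vmax \<Pi> D i y a \<and> vmax \<Pi> D i y a \<le> t"
    and "umin \<Pi> D i y v = v \<or> t \<le> umin \<Pi> D i y v \<and> umin \<Pi> D i y v < v" for v
    by (auto simp: vmax_def umin_def max_def min_def)
  with closer show ?thesis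
    by (smt (verit))
qed

lemma CLge_eq_umin_vmax:
  assumes "i \<in> {1..D}"
  shows "CLge \<Pi> D x i = umin \<Pi> D i (clp (geq_set \<Pi>) D (\<lambda>_ _. 0) x (i - 1))
           (vmax \<Pi> D i (clp (geq_set \<Pi>) D (\<lambda>_ _. 0) x (i - 1)) (x i))"
proof -
  obtain j where j: "i = Suc j"
    using assms by (cases i) auto
  have "CLge \<Pi> D x i = clp (geq_set \<Pi>) D (\<lambda>_ _. 0) x i i"
    using assms clp_stable[of i D] by (auto simp: CLge_def CL_def)
  then show ?thesis
    using j by (simp add: coord_geq_set)
qed

lemma CLge_unique_closest:
  assumes fin: "finite \<Pi>" and sat: "sat_set D \<Pi> x'"
    and closer: "\<forall>i\<in>{1..D}. \<bar>x' i - x i\<bar> \<le> \<bar>CLge \<Pi> D x i - x i\<bar>"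
  shows "i \<in> {1..D} \<Longrightarrow> x' i = CLge \<Pi> D x i"
proof (induction i rule: less_induct)
  case (less i)
  let ?y = "clp (geq_set \<Pi>) D (\<lambda>_ _. 0) x (i - 1)"
  have sat_i: "sat_set D (PiSet \<Pi> D i) x'"
    using sat by (rule sat_set_PiSet)
  have epsv_eq: "epsv D c i x' = epsv D c i ?y" if c: "c \<in> PiSet \<Pi> D i" for c
  proof (rule epsv_cong)
    fix k assume k: "k \<in> {1..D}" "k \<noteq> i" "wt c k \<noteq> 0"
    then have "k < i"
      using wt_PiSet_zero[OF c, of k] by (cases "i < k") auto
    then have "x' k = CLge \<Pi> D x k"
      using less k by auto
    also have "\<dots> = ?y k"
      using \<open>k < i\<close> k clp_stable[of k D] clp_stable[of k "i - 1"] by (simp add: CLge_def CL_def)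
    finally show "x' k = ?y k" .
  qed
  show ?case
    unfolding CLge_eq_umin_vmax[OF less.prems]
  proof (rule umin_vmax_unique_closest[OF finite_PiSet[OF fin]])
    show "\<forall>c\<in>poss i (PiSet \<Pi> D i). epsv D c i ?y \<le> x' i"
      using sat_i less.prems epsv_eq by (auto simp: poss_def sat_set_def sat_iff_epsv_le)
    show "\<forall>c\<in>negs i (PiSet \<Pi> D i). x' i \<le> epsv D c i ?y"
      using sat_i less.prems epsv_eq by (auto simp: negs_def sat_set_def sat_iff_le_epsv)
    have "\<bar>x' i - x i\<bar> \<le> \<bar>CLge \<Pi> D x i - x i\<bar>"
      using closer less.prems by blast
    then show "\<bar>x' i - x i\<bar> \<le> \<bar>umin \<Pi> D i ?y (vmax \<Pi> D i ?y (x i)) - x i\<bar>"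
      by (simp only: CLge_eq_umin_vmax[OF less.prems])
  qed
qed

lemma optimal_CL_if_eq_CLge:
  assumes "finite \<Pi>" and "satisfiable D \<Pi>" and "valid_eps \<Pi> D e x"
    and eq: "CL \<Pi> D e x = CLge \<Pi> D x"
  shows "optimal D \<Pi> x (CL \<Pi> D e x)"
  using sat_set_CL[OF assms(1-3)] CLge_unique_closest[OF assms(1)]
  unfolding optimal_def eq by blast

section \<open>Continuity of the constraint layer in the \<open>\<epsilon>\<close> values\<close>

definition l1_dist :: "nat \<Rightarrow> (nat \<Rightarrow> real) \<Rightarrow> (nat \<Rightarrow> real) \<Rightarrow> real" where
  "l1_dist D y y' = (\<Sum>k\<in>{1..D}. \<bar>y k - y' k\<bar>)"

lemma l1_dist_nonneg: "0 \<le> l1_dist D y y'"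
  by (simp add: l1_dist_def sum_nonneg)

lemma abs_diff_le_l1_dist: "k \<in> {1..D} \<Longrightarrow> \<bar>y k - y' k\<bar> \<le> l1_dist D y y'"
  unfolding l1_dist_def by (rule member_le_sum) auto

lemma l1_dist_upd: "l1_dist D (y(j := u)) (y'(j := v)) \<le> l1_dist D y y' + \<bar>u - v\<bar>"
proof -
  have "l1_dist D (y(j := u)) (y'(j := v)) \<le> (\<Sum>k\<in>{1..D}. \<bar>y k - y' k\<bar> + (if k = j then \<bar>u - v\<bar> else 0))"
    unfolding l1_dist_def by (rule sum_mono) auto
  also have "\<dots> \<le> l1_dist D y y' + \<bar>u - v\<bar>"
    by (simp add: l1_dist_def sum.distrib)
  finally show ?thesis .
qed

lemma epsv_lipschitz:
  "\<bar>epsv D c i y - epsv D c i y'\<bar> \<le> (\<Sum>k\<in>{1..D}. \<bar>wt c k / wt c i\<bar>) * l1_dist D y y'"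
proof -
  let ?S = "{1..D} - {i}"
  have "epsv D c i y - epsv D c i y' = (\<Sum>k\<in>?S. (wt c k / wt c i) * (y' k - y k))"
    by (simp add: epsv_def sum_subtractf[symmetric] right_diff_distrib)
  then have "\<bar>epsv D c i y - epsv D c i y'\<bar> \<le> (\<Sum>k\<in>?S. \<bar>wt c k / wt c i\<bar> * \<bar>y k - y' k\<bar>)"
    using sum_abs[of "\<lambda>k. (wt c k / wt c i) * (y' k - y k)" ?S] by (simp add: abs_mult abs_minus_commute)
  also have "\<dots> \<le> (\<Sum>k\<in>?S. \<bar>wt c k / wt c i\<bar> * l1_dist D y y')"
    by (rule sum_mono, rule mult_left_mono) (auto intro: abs_diff_le_l1_dist)
  also have "\<dots> \<le> (\<Sum>k\<in>{1..D}. \<bar>wt c k / wt c i\<bar> * l1_dist D y y')"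
    by (rule sum_mono2) (auto simp: l1_dist_nonneg)
  finally show ?thesis
    by (simp add: sum_distrib_right)
qed

definition epsv_lip_const :: "constr set \<Rightarrow> nat \<Rightarrow> real" where
  "epsv_lip_const \<Pi> D = (\<Sum>i\<in>{1..D}. \<Sum>c\<in>PiSet \<Pi> D i. \<Sum>k\<in>{1..D}. \<bar>wt c k / wt c i\<bar>)"

lemma epsv_lip_const_nonneg: "0 \<le> epsv_lip_const \<Pi> D"
  by (simp add: epsv_lip_const_def sum_nonneg)

lemma epsv_lipschitz_PiSet:
  assumes fin: "finite \<Pi>" and i: "i \<in> {1..D}" and c: "c \<in> PiSet \<Pi> D i"
  shows "\<bar>epsv D c i y - epsv D c i y'\<bar> \<le> epsv_lip_const \<Pi> D * l1_dist D y y'"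
proof -
  have "(\<Sum>k\<in>{1..D}. \<bar>wt c k / wt c i\<bar>) \<le> (\<Sum>c\<in>PiSet \<Pi> D i. \<Sum>k\<in>{1..D}. \<bar>wt c k / wt c i\<bar>)"
    using finite_PiSet[OF fin] c by (intro member_le_sum) (auto simp: sum_nonneg)
  also have "\<dots> \<le> epsv_lip_const \<Pi> D"
    unfolding epsv_lip_const_def using i
    by (intro member_le_sum[where f="\<lambda>i. \<Sum>c\<in>PiSet \<Pi> D i. \<Sum>k\<in>{1..D}. \<bar>wt c k / wt c i\<bar>"])
      (auto simp: sum_nonneg)
  finally show ?thesis
    using epsv_lipschitz[of D c i y y'] l1_dist_nonneg[of D y y']
    by (meson mult_right_mono order_trans)
qed

lemma Max_image_diff_le:
  fixes f g :: "'a \<Rightarrow> real"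
  assumes "finite S" "S \<noteq> {}" "\<forall>c\<in>S. \<bar>f c - g c\<bar> \<le> r"
  shows "\<bar>Max (f ` S) - Max (g ` S)\<bar> \<le> r"
proof -
  have "Max (f ` S) \<in> f ` S" "Max (g ` S) \<in> g ` S"
    using assms(1,2) by simp_all
  then obtain c1 c2 where c: "c1 \<in> S" "Max (f ` S) = f c1" "c2 \<in> S" "Max (g ` S) = g c2"
    by blast
  have "g c1 \<le> Max (g ` S)" "f c2 \<le> Max (f ` S)"
    using assms(1) c(1,3) by simp_all
  moreover have "f c1 - g c1 \<le> r" "g c2 - f c2 \<le> r"
    using assms(3) c by (auto simp: abs_le_iff)
  ultimately show ?thesis
    unfolding abs_le_iff c(2,4) by linarith
qed

lemma Min_image_diff_le:
  fixes f g :: "'a \<Rightarrow> real"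
  assumes "finite S" "S \<noteq> {}" "\<forall>c\<in>S. \<bar>f c - g c\<bar> \<le> r"
  shows "\<bar>Min (f ` S) - Min (g ` S)\<bar> \<le> r"
proof -
  have "Min (f ` S) \<in> f ` S" "Min (g ` S) \<in> g ` S"
    using assms(1,2) by simp_all
  then obtain c1 c2 where c: "c1 \<in> S" "Min (f ` S) = f c1" "c2 \<in> S" "Min (g ` S) = g c2"
    by blast
  have "Min (g ` S) \<le> g c1" "Min (f ` S) \<le> f c2"
    using assms(1) c(1,3) by simp_all
  moreover have "g c1 - f c1 \<le> r" "f c2 - g c2 \<le> r"
    using assms(3) c by (auto simp: abs_le_iff)
  ultimately show ?thesis
    unfolding abs_le_iff c(2,4) by linarith
qed

lemma abs_max_diff_le: "\<bar>max a M - max a M'\<bar> \<le> \<bar>M - M'\<bar>" for a M M' :: real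
  by (simp add: max_def abs_if)

lemma abs_min_diff_le: "\<bar>min b M - min b' M'\<bar> \<le> \<bar>b - b'\<bar> + \<bar>M - M'\<bar>" for b b' M M' :: real
  by (simp add: min_def abs_if)

lemma vmax_lipschitz:
  assumes "finite \<Pi>" and "i \<in> {1..D}"
  shows "\<bar>vmax \<Pi> D i y a - vmax \<Pi> D i y' a\<bar> \<le> epsv_lip_const \<Pi> D * l1_dist D y y'"
proof (cases "poss i (PiSet \<Pi> D i) = {}")
  case True
  then show ?thesis
    by (simp add: vmax_def epsv_lip_const_nonneg l1_dist_nonneg)
next
  case False
  let ?M = "\<lambda>y. Max ((\<lambda>c. epsv D c i y) ` poss i (PiSet \<Pi> D i))"
  have "\<bar>?M y - ?M y'\<bar> \<le> epsv_lip_const \<Pi> D * l1_dist D y y'"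
  proof (rule Max_image_diff_le[OF _ False])
    show "finite (poss i (PiSet \<Pi> D i))"
      using finite_PiSet[OF assms(1)] by (simp add: poss_def)
  qed (simp add: poss_def epsv_lipschitz_PiSet[OF assms])
  moreover have "vmax \<Pi> D i y a = max a (?M y)" "vmax \<Pi> D i y' a = max a (?M y')"
    using False by (simp_all add: vmax_def)
  ultimately show ?thesis
    using abs_max_diff_le[of a "?M y" "?M y'"] by linarith
qed

lemma umin_lipschitz:
  assumes "finite \<Pi>" and "i \<in> {1..D}"
  shows "\<bar>umin \<Pi> D i y b - umin \<Pi> D i y' b'\<bar> \<le> \<bar>b - b'\<bar> + epsv_lip_const \<Pi> D * l1_dist D y y'"
proof (cases "negs i (PiSet \<Pi> D i) = {}")
  case True
  then show ?thesis
    using epsv_lip_const_nonneg l1_dist_nonneg by (simp add: umin_def)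
next
  case False
  let ?M = "\<lambda>y. Min ((\<lambda>c. epsv D c i y) ` negs i (PiSet \<Pi> D i))"
  have "\<bar>?M y - ?M y'\<bar> \<le> epsv_lip_const \<Pi> D * l1_dist D y y'"
  proof (rule Min_image_diff_le[OF _ False])
    show "finite (negs i (PiSet \<Pi> D i))"
      using finite_PiSet[OF assms(1)] by (simp add: negs_def)
  qed (simp add: negs_def epsv_lipschitz_PiSet[OF assms])
  moreover have "umin \<Pi> D i y b = min b (?M y)" "umin \<Pi> D i y' b' = min b' (?M y')"
    using False by (simp_all add: umin_def)
  ultimately show ?thesis
    using abs_min_diff_le[of b "?M y" b' "?M y'"] by linarith
qed

lemma coord_dist_le:
  assumes "finite \<Pi>" and "i \<in> {1..D}" and "\<forall>s. \<bar>e i s\<bar> < \<eta>"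
  shows "\<bar>coord \<Pi> D e i y a - umin \<Pi> D i y' (vmax \<Pi> D i y' a)\<bar>
    \<le> 2 * \<eta> + 2 * epsv_lip_const \<Pi> D * l1_dist D y y'"
proof -
  let ?m = "maxi \<Pi> D e i y a"
  have "\<bar>?m - vmax \<Pi> D i y a\<bar> \<le> \<eta>"
    using assms(3) by (auto simp: maxi_def less_imp_le)
  moreover have "\<bar>coord \<Pi> D e i y a - umin \<Pi> D i y ?m\<bar> \<le> \<eta>"
    using assms(3) by (auto simp: coord_def mini_def less_imp_le)
  ultimately show ?thesis
    using umin_lipschitz[OF assms(1,2), of y ?m y' "vmax \<Pi> D i y' a"]
      vmax_lipschitz[OF assms(1,2), of y a y'] by linarith
qed

fun err_growth :: "real \<Rightarrow> nat \<Rightarrow> real" where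
  "err_growth L 0 = 0"
| "err_growth L (Suc n) = (1 + 2 * L) * err_growth L n + 2"

lemma err_growth_nonneg: "0 \<le> L \<Longrightarrow> 0 \<le> err_growth L n"
  by (induction n) auto

lemma l1_dist_clp_le:
  assumes fin: "finite \<Pi>" and small: "\<forall>i\<in>{1..D}. \<forall>s. \<bar>e i s\<bar> < \<eta>"
  shows "i \<le> D \<Longrightarrow> l1_dist D (clp \<Pi> D e x i) (clp (geq_set \<Pi>) D (\<lambda>_ _. 0) x i)
    \<le> err_growth (epsv_lip_const \<Pi> D) i * \<eta>"
proof (induction i)
  case 0
  then show ?case
    by (simp add: l1_dist_def)
next
  case (Suc i)
  let ?y = "clp \<Pi> D e x i" and ?y' = "clp (geq_set \<Pi>) D (\<lambda>_ _. 0) x i"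
  let ?L = "epsv_lip_const \<Pi> D"
  have i: "Suc i \<in> {1..D}"
    using Suc.prems by simp
  have "l1_dist D (clp \<Pi> D e x (Suc i)) (clp (geq_set \<Pi>) D (\<lambda>_ _. 0) x (Suc i))
     \<le> l1_dist D ?y ?y' + \<bar>coord \<Pi> D e (Suc i) ?y (x (Suc i))
        - umin \<Pi> D (Suc i) ?y' (vmax \<Pi> D (Suc i) ?y' (x (Suc i)))\<bar>"
    unfolding clp.simps coord_geq_set by (rule l1_dist_upd)
  also have "\<dots> \<le> (1 + 2 * ?L) * l1_dist D ?y ?y' + 2 * \<eta>"
    using coord_dist_le[OF fin i] small i by (fastforce simp: algebra_simps)
  also have "\<dots> \<le> (1 + 2 * ?L) * (err_growth ?L i * \<eta>) + 2 * \<eta>"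
    using Suc epsv_lip_const_nonneg[of \<Pi> D] by (intro add_right_mono mult_left_mono) auto
  also have "\<dots> = err_growth ?L (Suc i) * \<eta>"
    by (simp add: algebra_simps)
  finally show ?case .
qed

lemma l1_dist_CL_CLge_le:
  assumes "finite \<Pi>" and "\<forall>i\<in>{1..D}. \<forall>s. \<bar>e i s\<bar> < \<eta>"
  shows "l1_dist D (CL \<Pi> D e x) (CLge \<Pi> D x) \<le> err_growth (epsv_lip_const \<Pi> D) D * \<eta>"
  using l1_dist_clp_le[OF assms] by (simp add: CL_def CLge_def)

lemma CL_converges_to_CLge:
  assumes "finite \<Pi>" and "0 < \<delta>"
  shows "\<exists>\<eta>>0. \<forall>e. (\<forall>i\<in>{1..D}. \<forall>s. \<bar>e i s\<bar> < \<eta>) \<longrightarrow>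
    (\<forall>i\<in>{1..D}. \<bar>CL \<Pi> D e x i - CLge \<Pi> D x i\<bar> < \<delta>)"
proof -
  define C where "C = err_growth (epsv_lip_const \<Pi> D) D"
  have "0 \<le> C"
    unfolding C_def by (rule err_growth_nonneg[OF epsv_lip_const_nonneg])
  define \<eta> where "\<eta> = \<delta> / (C + 1)"
  have "0 < \<eta>" and "C * \<eta> < \<delta>"
    using \<open>0 < \<delta>\<close> \<open>0 \<le> C\<close> by (simp_all add: \<eta>_def field_simps)
  show ?thesis
  proof (intro exI[of _ \<eta>] conjI \<open>0 < \<eta>\<close> allI impI ballI)
    fix e :: "nat \<Rightarrow> bool \<Rightarrow> real" and i
    assume small: "\<forall>i\<in>{1..D}. \<forall>s. \<bar>e i s\<bar> < \<eta>" and "i \<in> {1..D}"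
    then have "\<bar>CL \<Pi> D e x i - CLge \<Pi> D x i\<bar> \<le> l1_dist D (CL \<Pi> D e x) (CLge \<Pi> D x)"
      by (intro abs_diff_le_l1_dist)
    also have "\<dots> \<le> C * \<eta>"
      unfolding C_def by (rule l1_dist_CL_CLge_le[OF assms(1) small])
    finally show "\<bar>CL \<Pi> D e x i - CLge \<Pi> D x i\<bar> < \<delta>"
      using \<open>C * \<eta> < \<delta>\<close> by simp
  qed
qed

theorem theorem3:
  fixes \<Pi> :: "constr set" and D :: nat and x :: "nat \<Rightarrow> real"
  assumes "finite \<Pi>" and "satisfiable D \<Pi>"
  shows "(\<forall>e. valid_eps \<Pi> D e x \<longrightarrow> CL \<Pi> D e x = CLge \<Pi> D x \<longrightarrow> optimal D \<Pi> x (CL \<Pi> D e x))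
       \<and> (\<forall>e. valid_eps \<Pi> D e x \<longrightarrow> CL \<Pi> D e x \<noteq> CLge \<Pi> D x \<longrightarrow>
            (\<forall>\<delta>>0. \<exists>\<eta>>0. \<forall>e'. valid_eps \<Pi> D e' x \<longrightarrow>
                (\<forall>i\<in>{1..D}. \<forall>s. \<bar>e' i s\<bar> < \<eta>) \<longrightarrow>
                (\<forall>i\<in>{1..D}. \<bar>CL \<Pi> D e' x i - CLge \<Pi> D x i\<bar> < \<delta>)))"
proof (intro conjI allI impI)
  fix e assume "valid_eps \<Pi> D e x" "CL \<Pi> D e x = CLge \<Pi> D x"
  with assms show "optimal D \<Pi> x (CL \<Pi> D e x)"
    by (rule optimal_CL_if_eq_CLge)
next
  fix \<delta> :: real assume "0 < \<delta>"
  with CL_converges_to_CLge[OF assms(1)] show "\<exists>\<eta>>0. \<forall>e'. valid_eps \<Pi> D e' x \<longrightarrow>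
      (\<forall>i\<in>{1..D}. \<forall>s. \<bar>e' i s\<bar> < \<eta>) \<longrightarrow> (\<forall>i\<in>{1..D}. \<bar>CL \<Pi> D e' x i - CLge \<Pi> D x i\<bar> < \<delta>)"
    by blast
qed

end
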